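(* Let $K=2m+1$ with $m\ge 3$ and suppose $t=KM/N=K-2$. Then the D2D coded caching rate $R=N/M-1$ is achievable with subpacketization $F=K(K-2)$.
   Context: D2D coded caching setting: there are $N\ge 1$ files $W_1,\dots,W_N$ and $K\ge 2$ users, each with a cache of size $M$ files, $0<M\le N$, and $t:=KM/N$ is assumed to be a positive integer. A D2D coded caching scheme with (uncoded placement and) subpacketization $F\in\mathbb{N}_+$ is defined as follows. Fix a packet size $b\ge 1$; each file is a sequence of $F$ packets $W_n=(W_n^{(1)},\dots,W_n^{(F)})$, $W_n^{(j)}\in\{0,1\}^b$. Placement: each user $k\in[K]$ stores the packets $\{W_n^{(j)}:(n,j)\in Z_k\}$ for a fixed index set $Z_k\subseteq[N]\times[F]$ with $|Z_k|\le MF$ (independent of demands and file contents). Delivery: for every demand vector $\mathbf d=(d_1,\dots,d_K)\in[N]^K$, each user $k$ broadcasts to all other users $\ell_k(\mathbf d)\in\mathbb{N}$ blocks in $\{0,1\}^b$, each a deterministic function of the packets stored by user $k$; it is required that for all file contents each user $k$ can recover all $F$ packets of $W_{d_k}$ from its stored packets and the blocks sent by the other users. The rate is $R=\max_{\mathbf d}\frac{1}{F}\sum_{k=1}^K\ell_k(\mathbf d)$ (transmitted bits normalized by the file size $Fb$). The rate $R$ is achievable with subpacketization $F$ if such a scheme with rate $R$ exists for every packet size $b\ge 1$. *)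

theory Defs
  imports Complex_Main "HOL-Library.FuncSet"
begin

text \<open>Files are indexed by n in {1..N}, packets by j in {1..F}, users by k in {1..K}.
  A file library W maps (n, j) to a packet (a bit string, bool list).\<close>

definition valid_files :: "nat \<Rightarrow> nat \<Rightarrow> nat \<Rightarrow> (nat \<Rightarrow> nat \<Rightarrow> bool list) \<Rightarrow> bool" where
  "valid_files N F b W \<longleftrightarrow> (\<forall>n\<in>{1..N}. \<forall>j\<in>{1..F}. length (W n j) = b)"

definition cache_content :: "(nat \<times> nat) set \<Rightarrow> (nat \<Rightarrow> nat \<Rightarrow> bool list) \<Rightarrow> (nat \<times> nat \<Rightarrow> bool list)" where
  "cache_content Z W = (\<lambda>p. if p \<in> Z then W (fst p) (snd p) else [])"

definition demands :: "nat \<Rightarrow> nat \<Rightarrow> (nat \<Rightarrow> nat) set" where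
  "demands N K = {1..K} \<rightarrow>\<^sub>E {1..N}"

text \<open>Z k: placement index set of user k; l d k: number of blocks sent by user k under
  demand d; enc d k: the blocks sent by user k, a function of the packets it stores;
  dec d k: decoder of user k, from its stored packets and the blocks sent by the other users.\<close>
definition d2d_scheme :: "nat \<Rightarrow> nat \<Rightarrow> real \<Rightarrow> nat \<Rightarrow> nat \<Rightarrow> real \<Rightarrow> bool" where
  "d2d_scheme N K M F b R \<longleftrightarrow>
    (\<exists>(Z :: nat \<Rightarrow> (nat \<times> nat) set) (l :: (nat \<Rightarrow> nat) \<Rightarrow> nat \<Rightarrow> nat)
      (enc :: (nat \<Rightarrow> nat) \<Rightarrow> nat \<Rightarrow> (nat \<times> nat \<Rightarrow> bool list) \<Rightarrow> bool list list)
      (dec :: (nat \<Rightarrow> nat) \<Rightarrow> nat \<Rightarrow> (nat \<times> nat \<Rightarrow> bool list) \<Rightarrow> (nat \<Rightarrow> bool list list) \<Rightarrow> nat \<Rightarrow> bool list).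
      (\<forall>k\<in>{1..K}. Z k \<subseteq> {1..N} \<times> {1..F} \<and> real (card (Z k)) \<le> M * real F) \<and>
      (\<forall>d\<in>demands N K. \<forall>k\<in>{1..K}. \<forall>W. valid_files N F b W \<longrightarrow>
          length (enc d k (cache_content (Z k) W)) = l d k \<and>
          (\<forall>x\<in>set (enc d k (cache_content (Z k) W)). length x = b)) \<and>
      (\<forall>d\<in>demands N K. \<forall>k\<in>{1..K}. \<forall>W. valid_files N F b W \<longrightarrow>
          (\<forall>j\<in>{1..F}.
             dec d k (cache_content (Z k) W)
               (\<lambda>i. if i \<in> {1..K} \<and> i \<noteq> k then enc d i (cache_content (Z i) W) else [])
               j = W (d k) j)) \<and>
      R = Max ((\<lambda>d. (\<Sum>k=1..K. real (l d k)) / real F) ` demands N K))"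

definition achievable_with_subpack :: "nat \<Rightarrow> nat \<Rightarrow> real \<Rightarrow> real \<Rightarrow> nat \<Rightarrow> bool" where
  "achievable_with_subpack N K M R F \<longleftrightarrow> F \<ge> 1 \<and> (\<forall>b\<ge>1. d2d_scheme N K M F b R)"

end

theory Submission
  imports Defs
begin

(* Index the packets of each file by the ordered pairs (x, y) of users on the cycle Z_K with
   y not in {x, x - 1}, and let packet (x, y) be cached by everybody except x and y.  This gives
   K(K - 2) packets per file, of which each user caches (K - 2)^2, exactly its budget
   M F / N for t = K - 2.  User u sends two coded blocks: the XOR over all y not in {u, u + 1}
   of packet (u + 1, y) of the file y demands, and the XOR over all y not in {u, u - 1} of
   packet (y, u - 1).  Each summand is missing only at its intended receiver and at a user
   that block does not serve, so every receiver cancels the other summands from its cache, and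
   packet (x, y) reaches y from user x - 1 and x from user y + 1.  The 2K blocks give the rate
   2K / (K(K - 2)) = N/M - 1. *)

definition xor_sum :: "nat \<Rightarrow> nat set \<Rightarrow> (nat \<Rightarrow> bool list) \<Rightarrow> bool list" where
  "xor_sum b Y v = map (\<lambda>i. odd (card {y \<in> Y. v y ! i})) [0..<b]"

lemma length_xor_sum [simp]: "length (xor_sum b Y v) = b"
  by (simp add: xor_sum_def)

lemma xor_sum_cong:
  assumes "\<And>y. y \<in> Y \<Longrightarrow> v y = v' y"
  shows "xor_sum b Y v = xor_sum b Y v'"
proof -
  have "{y \<in> Y. v y ! i} = {y \<in> Y. v' y ! i}" for i
    using assms by auto
  then show ?thesis by (simp add: xor_sum_def)
qed

lemma xor_sum_remove:
  assumes "finite Y" "k \<in> Y" "length (v k) = b"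
  shows "map2 (\<noteq>) (xor_sum b Y v) (xor_sum b (Y - {k}) v) = v k"
proof (rule nth_equalityI)
  fix i assume "i < length (map2 (\<noteq>) (xor_sum b Y v) (xor_sum b (Y - {k}) v))"
  then have i: "i < b" by simp
  have "{y \<in> Y. v y ! i} = (if v k ! i then insert k {y \<in> Y - {k}. v y ! i} else {y \<in> Y - {k}. v y ! i})"
    using assms(2) by auto
  then have "card {y \<in> Y. v y ! i} = card {y \<in> Y - {k}. v y ! i} + (if v k ! i then 1 else 0)"
    using assms(1) by simp
  then show "map2 (\<noteq>) (xor_sum b Y v) (xor_sum b (Y - {k}) v) ! i = v k ! i"
    using i by (simp add: xor_sum_def)
qed (simp add: assms(3))

(* Users are 0, ..., K - 1; user y caches packet p of every file unless miss y p.  The s-th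
   transmission of user u is the XOR, over y in served u s, of packet slot u s y of the file
   demanded by y. *)
locale xor_delivery =
  fixes K T :: nat and P :: "'p set" and miss :: "nat \<Rightarrow> 'p \<Rightarrow> bool"
    and served :: "nat \<Rightarrow> nat \<Rightarrow> nat set" and slot :: "nat \<Rightarrow> nat \<Rightarrow> nat \<Rightarrow> 'p"
  assumes served_subset: "u < K \<Longrightarrow> s < T \<Longrightarrow> served u s \<subseteq> {..<K}"
    and slot_in: "u < K \<Longrightarrow> s < T \<Longrightarrow> y \<in> served u s \<Longrightarrow> slot u s y \<in> P"
    and sender_caches: "u < K \<Longrightarrow> s < T \<Longrightarrow> y \<in> served u s \<Longrightarrow> \<not> miss u (slot u s y)"
    and receivers_cache:
      "u < K \<Longrightarrow> s < T \<Longrightarrow> y \<in> served u s \<Longrightarrow> w \<in> served u s \<Longrightarrow> w \<noteq> y \<Longrightarrow> \<not> miss w (slot u s y)"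
    and missed_delivered:
      "y < K \<Longrightarrow> p \<in> P \<Longrightarrow> miss y p \<Longrightarrow> \<exists>u<K. \<exists>s<T. y \<in> served u s \<and> slot u s y = p"

lemma (in xor_delivery) reindex:
  assumes e: "bij_betw e {..<F} P"
  shows "xor_delivery K T {..<F} (\<lambda>y q. miss y (e q)) served (\<lambda>u s y. inv_into {..<F} e (slot u s y))"
proof
  fix u s y assume "u < K" "s < T" "y \<in> served u s"
  then have slot: "slot u s y \<in> P" by (rule slot_in)
  then show "inv_into {..<F} e (slot u s y) \<in> {..<F}"
    using e by (metis bij_betw_imp_surj_on inv_into_into)
  have "e (inv_into {..<F} e (slot u s y)) = slot u s y"
    using e slot by (rule bij_betw_inv_into_right)
  then show "\<not> miss u (e (inv_into {..<F} e (slot u s y)))"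
    and "\<And>w. w \<in> served u s \<Longrightarrow> w \<noteq> y \<Longrightarrow> \<not> miss w (e (inv_into {..<F} e (slot u s y)))"
    using sender_caches receivers_cache \<open>u < K\<close> \<open>s < T\<close> \<open>y \<in> served u s\<close> by auto
next
  fix y q assume "y < K" "q \<in> {..<F}" "miss y (e q)"
  moreover have "e q \<in> P" using e \<open>q \<in> {..<F}\<close> by (metis bij_betwE)
  ultimately obtain u s where "u < K" "s < T" "y \<in> served u s" "slot u s y = e q"
    using missed_delivered by blast
  moreover have "inv_into {..<F} e (e q) = q"
    using e \<open>q \<in> {..<F}\<close> by (simp add: bij_betw_def)
  ultimately show "\<exists>u<K. \<exists>s<T. y \<in> served u s \<and> inv_into {..<F} e (slot u s y) = q"
    by metis
qed (use served_subset in auto)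

(* Users and packets are numbered from 0 here but from 1 in the scheme, hence the Suc and
   k - 1 shifts below. *)
locale indexed_xor_delivery = xor_delivery K T "{..<F}" miss served slot
  for K T F :: nat and miss :: "nat \<Rightarrow> nat \<Rightarrow> bool"
    and served :: "nat \<Rightarrow> nat \<Rightarrow> nat set" and slot :: "nat \<Rightarrow> nat \<Rightarrow> nat \<Rightarrow> nat"
begin

definition placement :: "nat \<Rightarrow> nat \<Rightarrow> (nat \<times> nat) set" where
  "placement N k = {1..N} \<times> Suc ` {q. q < F \<and> \<not> miss (k - 1) q}"

definition wanted :: "(nat \<Rightarrow> nat) \<Rightarrow> (nat \<times> nat \<Rightarrow> bool list) \<Rightarrow> nat \<Rightarrow> nat \<Rightarrow> nat \<Rightarrow> bool list" where
  "wanted d C u s y = C (d (Suc y), Suc (slot u s y))"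

definition encoder :: "nat \<Rightarrow> (nat \<Rightarrow> nat) \<Rightarrow> nat \<Rightarrow> (nat \<times> nat \<Rightarrow> bool list) \<Rightarrow> bool list list" where
  "encoder b d k C = map (\<lambda>s. xor_sum b (served (k - 1) s) (wanted d C (k - 1) s)) [0..<T]"

definition covering_transmission :: "nat \<Rightarrow> nat \<Rightarrow> nat \<times> nat" where
  "covering_transmission y q = (SOME (u, s). u < K \<and> s < T \<and> y \<in> served u s \<and> slot u s y = q)"

definition decoder ::
    "nat \<Rightarrow> (nat \<Rightarrow> nat) \<Rightarrow> nat \<Rightarrow> (nat \<times> nat \<Rightarrow> bool list) \<Rightarrow> (nat \<Rightarrow> bool list list) \<Rightarrow>
      nat \<Rightarrow> bool list"
  where
  "decoder b d k C Y j =
    (if \<not> miss (k - 1) (j - 1) then C (d k, j)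
     else case covering_transmission (k - 1) (j - 1) of (u, s) \<Rightarrow>
       map2 (\<noteq>) (Y (Suc u) ! s) (xor_sum b (served u s - {k - 1}) (wanted d C u s)))"

lemma card_placement: "card (placement N k) = N * card {q. q < F \<and> \<not> miss (k - 1) q}"
  by (simp add: placement_def card_cartesian_product card_image)

lemma cache_content_placement:
  "n \<in> {1..N} \<Longrightarrow> q < F \<Longrightarrow> \<not> miss w q \<Longrightarrow> cache_content (placement N (Suc w)) W (n, Suc q) = W n (Suc q)"
  by (simp add: cache_content_def placement_def)

lemma wanted_cache_content:
  assumes "d \<in> demands N K" "u < K" "s < T" "y \<in> served u s" "\<not> miss w (slot u s y)"
  shows "wanted d (cache_content (placement N (Suc w)) W) u s y = wanted d (case_prod W) u s y"
proof -
  have "y < K" using served_subset assms(2-4) by blast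
  then have "d (Suc y) \<in> {1..N}"
    using assms(1) by (auto simp: demands_def PiE_iff)
  moreover have "slot u s y < F" using slot_in assms(2-4) by blast
  ultimately show ?thesis
    using assms(5) by (simp add: wanted_def cache_content_placement)
qed

lemma encoder_cache_content:
  assumes "d \<in> demands N K" "u < K"
  shows "encoder b d (Suc u) (cache_content (placement N (Suc u)) W) = encoder b d (Suc u) (case_prod W)"
  unfolding encoder_def
  using assms sender_caches by (auto intro!: xor_sum_cong wanted_cache_content)

lemma covering_transmission_delivers:
  assumes "y < K" "q < F" "miss y q" "covering_transmission y q = (u, s)"
  shows "u < K \<and> s < T \<and> y \<in> served u s \<and> slot u s y = q"
proof -
  obtain u' s' where "u' < K \<and> s' < T \<and> y \<in> served u' s' \<and> slot u' s' y = q"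
    using missed_delivered assms(1-3) by blast
  then have "\<exists>us. case us of (u, s) \<Rightarrow> u < K \<and> s < T \<and> y \<in> served u s \<and> slot u s y = q"
    by (intro exI[of _ "(u', s')"]) simp
  then have "case covering_transmission y q of
      (u, s) \<Rightarrow> u < K \<and> s < T \<and> y \<in> served u s \<and> slot u s y = q"
    unfolding covering_transmission_def by (rule someI_ex)
  then show ?thesis using assms(4) by simp
qed

lemma decoder_correct:
  assumes d: "d \<in> demands N K" and y: "y < K" and q: "q < F" and W: "valid_files N F b W"
  shows "decoder b d (Suc y) (cache_content (placement N (Suc y)) W)
           (\<lambda>i. if i \<in> {1..K} \<and> i \<noteq> Suc y then encoder b d i (cache_content (placement N i) W) else [])
           (Suc q) = W (d (Suc y)) (Suc q)"
proof -
  have dy: "d (Suc y) \<in> {1..N}" using d y by (auto simp: demands_def PiE_iff)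
  show ?thesis
  proof (cases "miss y q")
    case False
    then show ?thesis using dy q by (simp add: decoder_def cache_content_placement)
  next
    case True
    obtain u s where us: "covering_transmission y q = (u, s)" by fastforce
    then have u: "u < K" "s < T" "y \<in> served u s" "slot u s y = q"
      using covering_transmission_delivers y q True by blast+
    have "u \<noteq> y" using sender_caches u True by blast
    have received: "encoder b d (Suc u) (cache_content (placement N (Suc u)) W) ! s =
        xor_sum b (served u s) (wanted d (case_prod W) u s)"
      using encoder_cache_content[OF d u(1)] u(2) by (simp add: encoder_def)
    have known: "xor_sum b (served u s - {y}) (wanted d (cache_content (placement N (Suc y)) W) u s) =
        xor_sum b (served u s - {y}) (wanted d (case_prod W) u s)"
      using d u receivers_cache by (auto intro!: xor_sum_cong wanted_cache_content)
    have "decoder b d (Suc y) (cache_content (placement N (Suc y)) W)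
           (\<lambda>i. if i \<in> {1..K} \<and> i \<noteq> Suc y then encoder b d i (cache_content (placement N i) W) else [])
           (Suc q) = map2 (\<noteq>) (xor_sum b (served u s) (wanted d (case_prod W) u s))
             (xor_sum b (served u s - {y}) (wanted d (case_prod W) u s))"
      using True us u \<open>u \<noteq> y\<close> by (simp add: decoder_def received known)
    also have "\<dots> = wanted d (case_prod W) u s y"
    proof (rule xor_sum_remove)
      show "finite (served u s)" using served_subset u(1,2) finite_subset by blast
      show "length (wanted d (case_prod W) u s y) = b"
        using W dy q u(4) by (simp add: wanted_def valid_files_def)
    qed (fact u(3))
    also have "\<dots> = W (d (Suc y)) (Suc q)" using u(4) by (simp add: wanted_def)
    finally show ?thesis .
  qed
qed

lemma d2d_scheme_indexed:
  assumes N: "N \<ge> 1"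
    and cache: "\<And>y. y < K \<Longrightarrow> real N * real (card {q. q < F \<and> \<not> miss y q}) \<le> M * real F"
  shows "d2d_scheme N K M F b (real (T * K) / real F)"
  unfolding d2d_scheme_def
proof (intro exI[of _ "placement N"] exI[of _ "\<lambda>_ _. T"] exI[of _ "encoder b"] exI[of _ "decoder b"]
    conjI ballI allI impI)
  fix k assume "k \<in> {1..K}"
  then obtain y where y: "k = Suc y" "y < K" by (cases k) auto
  show "placement N k \<subseteq> {1..N} \<times> {1..F}" by (auto simp: placement_def)
  show "real (card (placement N k)) \<le> M * real F"
    using cache[OF y(2)] y(1) by (simp add: card_placement)
  fix d W assume d: "d \<in> demands N K" and W: "valid_files N F b W"
  show "length (encoder b d k (cache_content (placement N k) W)) = T"
    by (simp add: encoder_def)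
  show "length x = b" if "x \<in> set (encoder b d k (cache_content (placement N k) W))" for x
    using that by (auto simp: encoder_def)
  fix j assume "j \<in> {1..F}"
  then obtain q where "j = Suc q" "q < F" by (cases j) auto
  then show "decoder b d k (cache_content (placement N k) W)
      (\<lambda>i. if i \<in> {1..K} \<and> i \<noteq> k then encoder b d i (cache_content (placement N i) W) else [])
      j = W (d k) j"
    using decoder_correct[OF d y(2) _ W] y by simp
next
  have "(\<lambda>k. if k \<in> {1..K} then 1 else undefined) \<in> demands N K"
    using N by (auto simp: demands_def)
  then have "(\<lambda>d. (\<Sum>k=1..K. real T) / real F) ` demands N K = {real (T * K) / real F}"
    by auto
  then show "real (T * K) / real F = Max ((\<lambda>d. (\<Sum>k=1..K. real T) / real F) ` demands N K)"
    by simp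
qed

end

lemma (in xor_delivery) d2d_scheme:
  assumes P: "finite P" and N: "N \<ge> 1"
    and cache: "\<And>y. y < K \<Longrightarrow> real N * real (card {p \<in> P. \<not> miss y p}) \<le> M * real (card P)"
  shows "d2d_scheme N K M (card P) b (real (T * K) / real (card P))"
proof -
  obtain e where e: "bij_betw e {..<card P} P"
    using ex_bij_betw_nat_finite[OF P] by (auto simp: atLeast0LessThan)
  interpret indexed: indexed_xor_delivery K T "card P" "\<lambda>y q. miss y (e q)" served
      "\<lambda>u s y. inv_into {..<card P} e (slot u s y)"
    using reindex[OF e] by (simp add: indexed_xor_delivery_def)
  have "card {q \<in> {..<card P}. \<not> miss y (e q)} = card {p \<in> P. \<not> miss y p}" for y
    by (rule bij_betw_same_card, rule bij_betw_Collect[OF e]) simp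
  then show ?thesis
    using indexed.d2d_scheme_indexed[OF N] cache by simp
qed

definition cyc_succ :: "nat \<Rightarrow> nat \<Rightarrow> nat" where
  "cyc_succ K u = (if Suc u = K then 0 else Suc u)"

definition cyc_pred :: "nat \<Rightarrow> nat \<Rightarrow> nat" where
  "cyc_pred K u = (if u = 0 then K - 1 else u - 1)"

lemma cyc_succ_less: "u < K \<Longrightarrow> cyc_succ K u < K"
  by (auto simp: cyc_succ_def)

lemma cyc_pred_less: "u < K \<Longrightarrow> cyc_pred K u < K"
  by (auto simp: cyc_pred_def)

lemma cyc_succ_pred [simp]: "u < K \<Longrightarrow> cyc_succ K (cyc_pred K u) = u"
  by (auto simp: cyc_succ_def cyc_pred_def)

lemma cyc_pred_succ [simp]: "u < K \<Longrightarrow> cyc_pred K (cyc_succ K u) = u"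
  by (auto simp: cyc_succ_def cyc_pred_def)

lemma cyc_pred_eq_iff [simp]: "u < K \<Longrightarrow> v < K \<Longrightarrow> cyc_pred K u = cyc_pred K v \<longleftrightarrow> u = v"
  by (auto simp: cyc_pred_def)

lemma cyc_pred_eq_iff_succ: "u < K \<Longrightarrow> v < K \<Longrightarrow> v = cyc_pred K u \<longleftrightarrow> cyc_succ K v = u"
  by (auto simp: cyc_succ_def cyc_pred_def)

lemma cyc_succ_neq [simp]: "2 \<le> K \<Longrightarrow> cyc_succ K u \<noteq> u"
  by (auto simp: cyc_succ_def)

lemma cyc_pred_neq [simp]: "2 \<le> K \<Longrightarrow> u < K \<Longrightarrow> cyc_pred K u \<noteq> u"
  by (auto simp: cyc_pred_def)

definition cyclic_packets :: "nat \<Rightarrow> (nat \<times> nat) set" where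
  "cyclic_packets K = {(x, y). x < K \<and> y < K \<and> y \<noteq> x \<and> y \<noteq> cyc_pred K x}"

definition cyclic_served :: "nat \<Rightarrow> nat \<Rightarrow> nat \<Rightarrow> nat set" where
  "cyclic_served K u s = {y. y < K \<and> y \<noteq> u \<and> y \<noteq> (if s = 0 then cyc_succ K u else cyc_pred K u)}"

definition cyclic_slot :: "nat \<Rightarrow> nat \<Rightarrow> nat \<Rightarrow> nat \<Rightarrow> nat \<times> nat" where
  "cyclic_slot K u s y = (if s = 0 then (cyc_succ K u, y) else (y, cyc_pred K u))"

lemma xor_delivery_cyclic:
  assumes K: "2 \<le> K"
  shows "xor_delivery K 2 (cyclic_packets K) (\<lambda>y p. y = fst p \<or> y = snd p)
           (cyclic_served K) (cyclic_slot K)"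
proof
  fix u s assume "u < K" "s < (2::nat)"
  then show "cyclic_served K u s \<subseteq> {..<K}" by (auto simp: cyclic_served_def)
next
  fix u s y assume u: "u < K" and s: "s < (2::nat)" and y: "y \<in> cyclic_served K u s"
  show "cyclic_slot K u s y \<in> cyclic_packets K"
    using u s y
    by (auto simp: cyclic_served_def cyclic_slot_def cyclic_packets_def cyc_succ_less cyc_pred_less
        less_2_cases_iff)
  show "\<not> (u = fst (cyclic_slot K u s y) \<or> u = snd (cyclic_slot K u s y))"
  proof (cases "s = 0")
    case True
    then show ?thesis using cyc_succ_neq[OF K, of u] y by (simp add: cyclic_served_def cyclic_slot_def)
  next
    case False
    then show ?thesis using cyc_pred_neq[OF K u] y by (simp add: cyclic_served_def cyclic_slot_def)
  qed
  fix w assume "w \<in> cyclic_served K u s" "w \<noteq> y"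
  then show "\<not> (w = fst (cyclic_slot K u s y) \<or> w = snd (cyclic_slot K u s y))"
    using u s y by (auto simp: cyclic_served_def cyclic_slot_def less_2_cases_iff)
next
  fix y p assume y: "y < K" and p: "p \<in> cyclic_packets K" and miss: "y = fst p \<or> y = snd p"
  obtain x1 x2 where p12: "p = (x1, x2)" and x: "x1 < K" "x2 < K" "x2 \<noteq> x1" "x2 \<noteq> cyc_pred K x1"
    using p by (auto simp: cyclic_packets_def)
  show "\<exists>u<K. \<exists>s<2. y \<in> cyclic_served K u s \<and> cyclic_slot K u s y = p"
  proof (cases "y = x2")
    case True
    have "y \<in> cyclic_served K (cyc_pred K x1) 0" "cyclic_slot K (cyc_pred K x1) 0 y = p"
      using x p12 True by (auto simp: cyclic_served_def cyclic_slot_def)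
    then show ?thesis
      using cyc_pred_less[OF x(1)] by (intro exI[of _ "cyc_pred K x1"] conjI exI[of _ "0::nat"]) simp_all
  next
    case False
    then have "y = x1" using miss p12 by simp
    then have "y \<in> cyclic_served K (cyc_succ K x2) 1" "cyclic_slot K (cyc_succ K x2) 1 y = p"
      using x p12 False by (auto simp: cyclic_served_def cyclic_slot_def cyc_pred_eq_iff_succ)
    then show ?thesis
      using cyc_succ_less[OF x(2)] by (intro exI[of _ "cyc_succ K x2"] conjI exI[of _ "1::nat"]) simp_all
  qed
qed

lemma card_lessThan_Diff_two:
  "a < K \<Longrightarrow> b < K \<Longrightarrow> b \<noteq> a \<Longrightarrow> card ({..<K} - {a, b}) = K - 2"
  by (simp add: card_Diff_subset)

lemma finite_cyclic_packets: "finite (cyclic_packets K)"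
  by (rule finite_subset[of _ "{..<K} \<times> {..<K}"]) (auto simp: cyclic_packets_def)

lemma card_cyclic_packets:
  assumes "2 \<le> K"
  shows "card (cyclic_packets K) = K * (K - 2)"
proof -
  have "cyclic_packets K = (SIGMA x:{..<K}. {..<K} - {x, cyc_pred K x})"
    by (auto simp: cyclic_packets_def)
  moreover have "card ({..<K} - {x, cyc_pred K x}) = K - 2" if "x < K" for x
    using that assms by (simp add: card_lessThan_Diff_two cyc_pred_less)
  ultimately show ?thesis by simp
qed

lemma card_cyclic_packets_missed:
  assumes K: "2 \<le> K" and y: "y < K"
  shows "card {p \<in> cyclic_packets K. y = fst p \<or> y = snd p} = 2 * (K - 2)"
proof -
  define A where "A = {..<K} - {y, cyc_pred K y}"
  define B where "B = {..<K} - {y, cyc_succ K y}"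
  have "{p \<in> cyclic_packets K. y = fst p \<or> y = snd p} = {y} \<times> A \<union> B \<times> {y}"
    using y by (auto simp: A_def B_def cyclic_packets_def cyc_pred_eq_iff_succ cyc_succ_less)
  moreover have "card ({y} \<times> A \<union> B \<times> {y}) = card A + card B"
    by (subst card_Un_disjoint) (auto simp: A_def B_def card_cartesian_product)
  moreover have "card A = K - 2" "card B = K - 2"
    using K y by (simp_all add: A_def B_def card_lessThan_Diff_two cyc_pred_less cyc_succ_less)
  ultimately show ?thesis by simp
qed

lemma card_cyclic_packets_cached:
  assumes "2 \<le> K" and "y < K"
  shows "card {p \<in> cyclic_packets K. y \<noteq> fst p \<and> y \<noteq> snd p} = (K - 2) * (K - 2)"
proof -
  have "{p \<in> cyclic_packets K. y \<noteq> fst p \<and> y \<noteq> snd p} =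
      cyclic_packets K - {p \<in> cyclic_packets K. y = fst p \<or> y = snd p}"
    by blast
  then have "card {p \<in> cyclic_packets K. y \<noteq> fst p \<and> y \<noteq> snd p} = K * (K - 2) - 2 * (K - 2)"
    using assms by (simp add: card_Diff_subset finite_cyclic_packets card_cyclic_packets
        card_cyclic_packets_missed)
  then show ?thesis by (simp add: diff_mult_distrib)
qed

theorem mainTheorem6:
  fixes N K m :: nat and M :: real
  assumes "N \<ge> 1" and "0 < M" and "M \<le> real N"
    and "m \<ge> 3" and "K = 2 * m + 1"
    and "real K * M / real N = real K - 2"
  shows "achievable_with_subpack N K M (real N / M - 1) (K * (K - 2))"
proof -
  have K: "3 \<le> K" using assms(4,5) by simp
  interpret cyclic: xor_delivery K 2 "cyclic_packets K" "\<lambda>y p. y = fst p \<or> y = snd p"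
      "cyclic_served K" "cyclic_slot K"
    using K by (intro xor_delivery_cyclic) simp
  have K2: "real (K - 2) = real K - 2" using K by (simp add: of_nat_diff)
  have M: "M = (real K - 2) * real N / real K"
    using assms(1,6) K by (simp add: field_simps)
  have cache: "real N * real ((K - 2) * (K - 2)) = M * real (K * (K - 2))"
    using K K2 by (simp add: M)
  have rate: "real N / M - 1 = real (2 * K) / real (K * (K - 2))"
    using K K2 assms(1) by (simp add: M field_simps)
  have "d2d_scheme N K M (K * (K - 2)) b (real (2 * K) / real (K * (K - 2)))" for b
    using cyclic.d2d_scheme[OF finite_cyclic_packets assms(1)] K cache
    by (simp add: card_cyclic_packets card_cyclic_packets_cached)
  then show ?thesis
    using K by (simp add: achievable_with_subpack_def rate)
qed

end
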